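(* Let $L\ge 2$ and let $\Theta$ be a model, i.e. a set of probability vectors $(p_x)_{x\in\{0,1\}^L}$ with $p_x>0$ for all $x$ and $\sum_x p_x=1$. If $\Theta$ admits a consistent population size estimator, then there exists a function $f$ such that $p_{\mathbf{0}} = f\big((q_x)_{x\neq \mathbf{0}}\big)$ for all $(p_x)_{x\in\{0,1\}^L}\in\Theta$, where $q_x = p_x/(1-p_{\mathbf{0}})$ for $x\neq\mathbf{0}$.
   Context: Multiple systems estimation setting: there are $L$ lists and a population of individuals $i=1,2,3,\dots$. Each individual has a list inclusion pattern $W_i=(W_{i,1},\dots,W_{i,L})\in\{0,1\}^L$, with $W_{i,j}=1$ iff individual $i$ appears on list $j$; $\mathbf{0}=(0,\dots,0)$ means unobserved. The $W_i$ are independent and identically distributed with $\mathbb{P}(W_i=x)=p_x$. For a population of size $N$ the observed data are the counts $n_x^{(N)}=\#\{i\le N: W_i=x\}$ for $x\in\{0,1\}^L\setminus\{\mathbf{0}\}$. A population size estimator $\hat N$ is a function of the observed counts $(n_x)_{x\neq\mathbf{0}}$. It is consistent for a model $\Theta$ if, whenever $(p_x)\in\Theta$, $\hat N\big((n_x^{(N)})_{x\neq\mathbf{0}}\big)/N\to 1$ almost surely as $N\to\infty$. *)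

theory Defs
  imports "HOL-Probability.Probability"
begin

text \<open>List inclusion patterns x in {0,1}^L, encoded as boolean lists of length L.\<close>
definition patterns :: "nat \<Rightarrow> bool list set" where
  "patterns L = {xs. length xs = L}"

definition zero_pat :: "nat \<Rightarrow> bool list" where
  "zero_pat L = replicate L False"

definition prob_vector :: "nat \<Rightarrow> (bool list \<Rightarrow> real) \<Rightarrow> bool" where
  "prob_vector L p \<longleftrightarrow> (\<forall>x\<in>patterns L. p x > 0) \<and> (\<Sum>x\<in>patterns L. p x) = 1"

definition pattern_pmf :: "nat \<Rightarrow> (bool list \<Rightarrow> real) \<Rightarrow> bool list pmf" where
  "pattern_pmf L p = embed_pmf (\<lambda>x. if x \<in> patterns L then p x else 0)"

definition iid_law :: "nat \<Rightarrow> (bool list \<Rightarrow> real) \<Rightarrow> (nat \<Rightarrow> bool list) measure" where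
  "iid_law L p = (\<Pi>\<^sub>M i\<in>UNIV. measure_pmf (pattern_pmf L p))"

definition obs_counts :: "nat \<Rightarrow> (nat \<Rightarrow> bool list) \<Rightarrow> nat \<Rightarrow> bool list \<Rightarrow> nat" where
  "obs_counts L w N = (\<lambda>x. if x \<in> patterns L - {zero_pat L} then card {i. i < N \<and> w i = x} else 0)"

definition consistent_estimator ::
  "nat \<Rightarrow> (bool list \<Rightarrow> real) set \<Rightarrow> ((bool list \<Rightarrow> nat) \<Rightarrow> real) \<Rightarrow> bool" where
  "consistent_estimator L \<Theta> Nhat \<longleftrightarrow>
     (\<forall>p\<in>\<Theta>. AE w in iid_law L p. (\<lambda>N. Nhat (obs_counts L w N) / real N) \<longlonglongrightarrow> 1)"

definition qvec :: "nat \<Rightarrow> (bool list \<Rightarrow> real) \<Rightarrow> bool list \<Rightarrow> real" where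
  "qvec L p = (\<lambda>x. if x \<in> patterns L - {zero_pat L} then p x / (1 - p (zero_pat L)) else 0)"

end

theory Submission
  imports Defs
begin

text \<open>
  Think of the individuals as an i.i.d. stream with law \<open>p\<close>. Deleting the unobserved ones
  leaves the stream of observed patterns, which is again i.i.d., now with law the conditional
  distribution \<open>q\<close>; hence every statistic of the observed stream has a law depending on \<open>q\<close>
  alone. One such statistic is \<open>N\<^sub>k/k\<close>, where \<open>N\<^sub>k\<close> is the estimate computed from the first
  \<open>k\<close> observed individuals. By the strong law of large numbers about \<open>N (1 - p\<^sub>0)\<close> of the first
  \<open>N\<close> individuals are observed, so consistency of the estimator forces \<open>N\<^sub>k/k\<close> to converge
  almost surely to \<open>1 / (1 - p\<^sub>0)\<close>. Two models with the same \<open>q\<close> therefore have the same \<open>p\<^sub>0\<close>.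
\<close>

section \<open>Filtering and counting\<close>

text \<open>\<open>sdrop_while\<close> is a tail-recursive partial function: where the recursion never stops its value
  is \<open>undefined\<close>, a fixed stream, which is what makes \<open>sdrop_while\<close> and \<open>sfilter\<close> measurable.\<close>

lemma sdrop_while_never:
  assumes "\<forall>n. P (s !! n)"
  shows "sdrop_while P s = undefined"
proof (rule ccontr)
  assume defined: "sdrop_while P s \<noteq> undefined"
  have "(\<lambda>(P, s) _. \<exists>n. \<not> P (s !! n)) (P, s) (sdrop_while P s)"
  proof (rule sdrop_while.raw_induct[where Pa = "\<lambda>(P, s) _. \<exists>n. \<not> P (s !! n)", OF _ refl defined])
    fix P s and IH :: "('a \<Rightarrow> bool) \<Rightarrow> 'a stream \<Rightarrow> 'a stream" and y
    assume IH: "\<And>P' s' y. IH P' s' = y \<Longrightarrow> y \<noteq> undefined \<Longrightarrow> (\<lambda>(P, s) _. \<exists>n. \<not> P (s !! n)) (P', s') y"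
      and y: "(if P (shd s) then IH P (stl s) else s) = y" "y \<noteq> undefined"
    show "(\<lambda>(P, s) _. \<exists>n. \<not> P (s !! n)) (P, s) y"
    proof (cases "P (shd s)")
      case True
      with IH[of P "stl s" y] y obtain n where "\<not> P (stl s !! n)" by auto
      then show ?thesis by (auto intro: exI[of _ "Suc n"])
    qed (auto intro: exI[of _ 0])
  qed
  with assms show False by auto
qed

lemma sdrop_while_Not_eq:
  "sdrop_while (Not \<circ> P) s = (if \<exists>n. P (s !! n) then sdrop (LEAST n. P (s !! n)) s else undefined)"
  by (simp add: sdrop_while_sdrop_LEAST sdrop_while_never)

lemma measurable_sdrop_while[measurable]:
  "sdrop_while (Not \<circ> P) \<in> measurable (stream_space (count_space UNIV)) (stream_space (count_space UNIV))"
proof -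
  have [measurable]: "Measurable.pred (stream_space (count_space UNIV)) (\<lambda>s. P (s !! n))" for n
    by (rule measurable_compose[OF measurable_snth]) simp
  have [measurable]: "(\<lambda>s. sdrop (LEAST n. P (s !! n)) s)
      \<in> measurable (stream_space (count_space UNIV)) (stream_space (count_space UNIV))"
    by (rule measurable_compose_countable[where f = "\<lambda>i s. sdrop i s"]) measurable
  have ex: "{s \<in> space (stream_space (count_space UNIV)). \<exists>n. P (s !! n)}
      \<in> sets (stream_space (count_space UNIV))"
    by measurable
  show ?thesis
    unfolding sdrop_while_Not_eq[abs_def]
    by (intro measurable_If ex measurable_const) (auto simp: space_stream_space)
qed

lemma measurable_sfilter[measurable]:
  "sfilter P \<in> measurable (stream_space (count_space UNIV)) (stream_space (count_space UNIV))"
proof -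
  let ?S = "stream_space (count_space UNIV) :: 'a stream measure"
  have "(\<lambda>s. sfilter P (id s)) \<in> measurable ?S ?S"
  proof (rule measurable_stream_coinduct[where
        F = "\<lambda>f. \<exists>g \<in> measurable ?S ?S. f = (\<lambda>s. sfilter P (g s))"])
    show "\<exists>g \<in> measurable ?S ?S. (\<lambda>s. sfilter P (id s)) = (\<lambda>s. sfilter P (g s))"
      by (intro bexI[of _ id]) auto
  next
    fix f assume "\<exists>g \<in> measurable ?S ?S. f = (\<lambda>s. sfilter P (g s))"
    then obtain g where [measurable]: "g \<in> measurable ?S ?S" and f: "f = (\<lambda>s. sfilter P (g s))" by blast
    show "(\<lambda>s. shd (f s)) \<in> measurable ?S (count_space UNIV)"
      unfolding f by simp
    show "\<exists>g \<in> measurable ?S ?S. (\<lambda>s. stl (f s)) = (\<lambda>s. sfilter P (g s))"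
      unfolding f by (intro bexI[of _ "\<lambda>s. stl (sdrop_while (Not \<circ> P) (g s))"]) auto
  qed
  then show ?thesis by simp
qed

lemma stake_sfilter:
  "filter P (stake n s) = stake (length (filter P (stake n s))) (sfilter P s)"
proof (induction n arbitrary: s)
  case (Suc n)
  then show ?case by (cases s) (simp add: sfilter_Stream)
qed simp

lemma length_filter_stake: "length (filter P (stake n s)) = card {i. i < n \<and> P (s !! i)}"
  by (simp add: length_filter_conv_card) (metis (mono_tags, lifting) stake_nth)

lemma card_less_Suc_le: "card {i. i < Suc n \<and> P i} \<le> Suc (card {i. i < n \<and> P i})"
proof -
  have "{i. i < Suc n \<and> P i} \<subseteq> insert n {i. i < n \<and> P i}" by (auto simp: less_Suc_eq)
  then have "card {i. i < Suc n \<and> P i} \<le> card (insert n {i. i < n \<and> P i})"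
    by (rule card_mono[rotated]) simp
  also have "\<dots> \<le> Suc (card {i. i < n \<and> P i})" by (rule card_insert_le_m1) simp_all
  finally show ?thesis .
qed

lemma INFM_of_density_pos:
  assumes density: "(\<lambda>n. real (card {i. i < n \<and> P i}) / real n) \<longlonglongrightarrow> \<mu>" and "\<mu> > 0"
  shows "\<exists>\<^sub>\<infinity>i. P i"
proof (rule ccontr)
  assume "\<not> (\<exists>\<^sub>\<infinity>i. P i)"
  then obtain m where m: "\<And>i. i \<ge> m \<Longrightarrow> \<not> P i"
    by (auto simp: INFM_nat_le)
  have "card {i. i < n \<and> P i} \<le> m" for n
    using card_mono[of "{..<m}" "{i. i < n \<and> P i}"] m by (force simp: not_le[symmetric])
  then have "real (card {i. i < n \<and> P i}) / real n \<le> real m / real n" for n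
    by (simp add: divide_right_mono)
  moreover have "(\<lambda>n. real m / real n) \<longlonglongrightarrow> 0"
    by (intro tendsto_divide_0[OF tendsto_const] filterlim_at_top_imp_at_infinity[OF filterlim_real_sequentially])
  ultimately have "\<mu> \<le> 0"
    by (intro tendsto_le[OF trivial_limit_sequentially _ density]) auto
  with \<open>\<mu> > 0\<close> show False by simp
qed

lemma LIMSEQ_divide_along_counter:
  fixes F :: "nat \<Rightarrow> real" and c :: "nat \<Rightarrow> nat"
  assumes F: "(\<lambda>N. F (c N) / real N) \<longlonglongrightarrow> a" and c: "(\<lambda>N. real (c N) / real N) \<longlonglongrightarrow> \<mu>"
    and "\<mu> > 0" and c_0: "c 0 = 0" and c_Suc: "\<And>N. c (Suc N) \<le> Suc (c N)"
  shows "(\<lambda>k. F k / real k) \<longlonglongrightarrow> a / \<mu>"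
proof -
  have c_le: "c N \<le> N" for N
  proof (induction N)
    case (Suc N)
    then show ?case using c_Suc[of N] by simp
  qed (simp add: c_0)
  have "filterlim (\<lambda>N. real (c N) / real N * real N) at_top sequentially"
    by (rule filterlim_tendsto_pos_mult_at_top[OF c \<open>\<mu> > 0\<close> filterlim_real_sequentially])
  moreover have "eventually (\<lambda>N. real (c N) / real N * real N = real (c N)) sequentially"
    using eventually_gt_at_top[of "0::nat"] by eventually_elim simp
  ultimately have "filterlim (\<lambda>N. real (c N)) at_top sequentially"
    using filterlim_cong by fastforce
  then have unbounded: "\<exists>N. k \<le> c N" for k
    unfolding filterlim_at_top eventually_sequentially by (metis order.refl of_nat_le_iff)
  define first where "first k = (LEAST N. k \<le> c N)" for k
  \<comment> \<open>the counter rises by at most one per step, so it takes the value \<open>k\<close> at time \<open>first k\<close>\<close>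
  have c_first: "c (first k) = k" for k
  proof -
    have ge: "k \<le> c (first k)" unfolding first_def by (rule LeastI_ex[OF unbounded])
    show ?thesis
    proof (cases "first k")
      case (Suc m)
      have "\<not> k \<le> c m" unfolding first_def by (rule not_less_Least) (simp add: Suc[unfolded first_def])
      then show ?thesis using ge c_Suc[of m] Suc by simp
    qed (use ge c_0 in simp)
  qed
  have first_ge: "k \<le> first k" for k
    using c_le[of "first k"] c_first[of k] by simp
  have first_at_top: "filterlim first at_top sequentially"
    unfolding filterlim_at_top eventually_sequentially using first_ge order.trans by blast
  have "(\<lambda>k. (F (c (first k)) / real (first k)) / (real (c (first k)) / real (first k))) \<longlonglongrightarrow> a / \<mu>"
    using filterlim_compose[OF F first_at_top] filterlim_compose[OF c first_at_top] \<open>\<mu> > 0\<close>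
    by (intro tendsto_divide) (simp_all add: o_def)
  moreover have "eventually (\<lambda>k. (F (c (first k)) / real (first k)) / (real (c (first k)) / real (first k))
      = F k / real k) sequentially"
    using eventually_gt_at_top[of "0::nat"]
  proof eventually_elim
    case (elim k)
    then have "first k > 0" using first_ge[of k] by simp
    then show ?case by (simp add: c_first)
  qed
  ultimately show ?thesis by (rule Lim_transform_eventually)
qed

section \<open>Strong law of large numbers for bounded i.i.d. variables\<close>

lemma (in prob_space) indep_vars_PiM_components:
  "prob_space.indep_vars (\<Pi>\<^sub>M i\<in>UNIV. M) (\<lambda>_. M) (\<lambda>i \<omega>. \<omega> i) I"
proof -
  interpret P: product_prob_space "\<lambda>_. M" UNIV ..
  show ?thesis
  proof (cases "I = {}")
    case True
    then show ?thesis by (simp add: P.indep_vars_def2 P.indep_sets_def)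
  next
    case False
    have "distr (\<Pi>\<^sub>M i\<in>UNIV. M) (\<Pi>\<^sub>M i\<in>I. M) (\<lambda>\<omega>. \<lambda>i\<in>I. \<omega> i) = (\<Pi>\<^sub>M i\<in>I. M)"
      using distr_PiM_reindex[of UNIV "\<lambda>_. M" id I] by (simp add: prob_space_axioms)
    also have "\<dots> = (\<Pi>\<^sub>M i\<in>I. distr (\<Pi>\<^sub>M i\<in>UNIV. M) M (\<lambda>\<omega>. \<omega> i))"
      by (intro PiM_cong refl) (simp add: P.PiM_component)
    finally show ?thesis
      by (subst P.indep_vars_iff_distr_eq_PiM[OF False]) simp_all
  qed
qed

lemma (in prob_space) Hoeffding_PiM_average:
  assumes [measurable]: "f \<in> borel_measurable M" and bounded: "AE x in M. f x \<in> {a..b}"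
    and "a < b" and "\<epsilon> \<ge> 0" and "n > 0"
  shows "measure (\<Pi>\<^sub>M i\<in>UNIV. M)
      {\<omega> \<in> space (\<Pi>\<^sub>M i\<in>UNIV. M). \<bar>(\<Sum>i<n. f (\<omega> i)) / real n - expectation f\<bar> \<ge> \<epsilon>}
    \<le> 2 * exp (-2 * real n * \<epsilon>\<^sup>2 / (b - a)\<^sup>2)"
proof -
  interpret P: product_prob_space "\<lambda>_. M" UNIV ..
  have component_law: "distr (\<Pi>\<^sub>M i\<in>UNIV. M) borel (\<lambda>\<omega>. f (\<omega> i)) = distr M borel f" for i
    using distr_distr[of f M borel "\<lambda>\<omega>. \<omega> i" "\<Pi>\<^sub>M i\<in>UNIV. M"] by (simp add: P.PiM_component comp_def)
  interpret H: Hoeffding_ineq_iid "\<Pi>\<^sub>M i\<in>UNIV. M" "{..<n}" "\<lambda>i \<omega>. f (\<omega> i)" "\<lambda>\<omega>. f (\<omega> 0)" a b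
    "expectation f"
  proof unfold_locales
    show "P.indep_vars (\<lambda>_. borel) (\<lambda>i \<omega>. f (\<omega> i)) {..<n}"
      by (rule P.indep_vars_compose2[OF indep_vars_PiM_components]) simp
    show "distr (\<Pi>\<^sub>M i\<in>UNIV. M) borel (\<lambda>\<omega>. f (\<omega> i)) = distr (\<Pi>\<^sub>M i\<in>UNIV. M) borel (\<lambda>\<omega>. f (\<omega> 0))"
      for i
      by (simp only: component_law)
    show "AE \<omega> in \<Pi>\<^sub>M i\<in>UNIV. M. f (\<omega> 0) \<in> {a..b}"
      using AE_PiM_component[where I = UNIV and M = "\<lambda>_. M", OF _ _ bounded] by (simp add: prob_space_axioms)
    have "expectation f = P.expectation (\<lambda>\<omega>. f (\<omega> 0))"
      by (subst P.PiM_component[symmetric, of 0]) (simp_all add: integral_distr)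
    then show "expectation f \<equiv> P.expectation (\<lambda>\<omega>. f (\<omega> 0))"
      by (rule eq_reflection)
  qed measurable
  show ?thesis
    using H.Hoeffding_ineq_abs_ge'[OF \<open>\<epsilon> \<ge> 0\<close> \<open>a < b\<close>] \<open>n > 0\<close> by (simp add: lessThan_empty_iff)
qed

lemma (in prob_space) AE_PiM_eventually_average_close:
  assumes [measurable]: "f \<in> borel_measurable M" and bounded: "AE x in M. f x \<in> {a..b}"
    and "\<epsilon> > 0"
  shows "AE \<omega> in \<Pi>\<^sub>M i\<in>UNIV. M.
    eventually (\<lambda>n. \<bar>(\<Sum>i<n. f (\<omega> i)) / real n - expectation f\<bar> < \<epsilon>) sequentially"
proof -
  interpret P: product_prob_space "\<lambda>_. M" UNIV ..
  define b' where "b' = max b (a + 1)"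
  have "a < b'" by (simp add: b'_def)
  have bounded': "AE x in M. f x \<in> {a..b'}"
    using bounded by eventually_elim (auto simp: b'_def)
  define far where "far n = {\<omega> \<in> space (\<Pi>\<^sub>M i\<in>UNIV. M).
    \<bar>(\<Sum>i<Suc n. f (\<omega> i)) / real (Suc n) - expectation f\<bar> \<ge> \<epsilon>}" for n
  have [measurable]: "far n \<in> sets (\<Pi>\<^sub>M i\<in>UNIV. M)" for n
    unfolding far_def by measurable
  define q where "q = exp (-2 * \<epsilon>\<^sup>2 / (b' - a)\<^sup>2)"
  have "exp (-2 * real (Suc n) * \<epsilon>\<^sup>2 / (b' - a)\<^sup>2) = q ^ Suc n" for n
    unfolding q_def by (subst exp_of_nat_mult[symmetric]) (simp only: times_divide_eq_right mult_ac)
  then have far_le: "P.prob (far n) \<le> 2 * q ^ Suc n" for n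
    using Hoeffding_PiM_average[OF _ bounded' \<open>a < b'\<close>, of \<epsilon> "Suc n"] \<open>\<epsilon> > 0\<close>
    by (simp add: far_def)
  have "0 < q" "q < 1"
    using \<open>\<epsilon> > 0\<close> \<open>a < b'\<close> by (auto simp: q_def)
  then have "summable (\<lambda>n. 2 * q ^ Suc n)"
    by (simp add: summable_mult)
  then have "summable (\<lambda>n. P.prob (far n))"
    by (rule summable_comparison_test'[where N = 0]) (use far_le in simp)
  then have "AE \<omega> in \<Pi>\<^sub>M i\<in>UNIV. M. eventually (\<lambda>n. \<omega> \<in> space (\<Pi>\<^sub>M i\<in>UNIV. M) - far n) sequentially"
    by (intro borel_cantelli_AE1) (simp_all add: P.emeasure_eq_measure)
  then show ?thesis
    by eventually_elim
       (rule eventually_sequentially_Suc[THEN iffD1], auto simp: far_def not_le elim!: eventually_mono)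
qed

lemma (in prob_space) AE_PiM_average_tendsto:
  assumes [measurable]: "f \<in> borel_measurable M" and bounded: "AE x in M. f x \<in> {a..b}"
  shows "AE \<omega> in \<Pi>\<^sub>M i\<in>UNIV. M. (\<lambda>n. (\<Sum>i<n. f (\<omega> i)) / real n) \<longlonglongrightarrow> expectation f"
proof -
  have "AE \<omega> in \<Pi>\<^sub>M i\<in>UNIV. M. \<forall>k.
      eventually (\<lambda>n. \<bar>(\<Sum>i<n. f (\<omega> i)) / real n - expectation f\<bar> < inverse (Suc k)) sequentially"
    by (subst AE_all_countable) (simp add: AE_PiM_eventually_average_close[OF _ bounded])
  then show ?thesis
  proof eventually_elim
    case (elim \<omega>)
    show ?case
    proof (rule tendstoI)
      fix e :: real assume "e > 0"
      then obtain k where "inverse (real (Suc k)) < e"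
        using reals_Archimedean by blast
      with elim[rule_format, of k]
      show "eventually (\<lambda>n. dist ((\<Sum>i<n. f (\<omega> i)) / real n) (expectation f) < e) sequentially"
        by (auto simp: dist_real_def elim: eventually_mono)
    qed
  qed
qed

lemma (in prob_space) AE_PiM_frequency_tendsto:
  assumes [measurable]: "A \<in> sets M"
  shows "AE \<omega> in \<Pi>\<^sub>M i\<in>UNIV. M. (\<lambda>n. real (card {i. i < n \<and> \<omega> i \<in> A}) / real n) \<longlonglongrightarrow> prob A"
proof -
  have "AE \<omega> in \<Pi>\<^sub>M i\<in>UNIV. M. (\<lambda>n. (\<Sum>i<n. indicator A (\<omega> i)) / real n) \<longlonglongrightarrow> expectation (indicator A)"
    by (rule AE_PiM_average_tendsto[where a = 0 and b = 1]) (auto split: split_indicator)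
  moreover have "(\<Sum>i<n. indicator A (\<omega> i) :: real) = real (card {i. i < n \<and> \<omega> i \<in> A})"
    for \<omega> :: "nat \<Rightarrow> 'a" and n
    unfolding indicator_def by (subst sum_of_bool_eq) (simp_all add: Int_def)
  ultimately show ?thesis by simp
qed

lemma snth_to_stream: "(\<lambda>x. (!!) (to_stream x)) = (\<lambda>x. x)"
  by (simp add: to_stream_def fun_eq_iff)

lemma (in prob_space) PiM_eq_distr_snth:
  "(\<Pi>\<^sub>M i\<in>UNIV. M) = distr (stream_space M) (\<Pi>\<^sub>M i\<in>UNIV. M) (\<lambda>s n. s !! n)"
proof -
  have "distr (stream_space M) (\<Pi>\<^sub>M i\<in>UNIV. M) (\<lambda>s n. s !! n)
      = distr (distr (\<Pi>\<^sub>M i\<in>UNIV. M) (stream_space M) to_stream) (\<Pi>\<^sub>M i\<in>UNIV. M) (\<lambda>s n. s !! n)"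
    by (subst stream_space_eq_distr) simp
  also have "\<dots> = distr (\<Pi>\<^sub>M i\<in>UNIV. M) (\<Pi>\<^sub>M i\<in>UNIV. M) (\<lambda>x. x)"
    using to_stream_def by (subst distr_distr) (simp_all add: measurable_snth_PiM comp_def snth_to_stream)
  finally show ?thesis by simp
qed

lemma (in prob_space) AE_stream_space_of_AE_PiM:
  assumes "AE \<omega> in \<Pi>\<^sub>M i\<in>UNIV. M. P \<omega>"
  shows "AE s in stream_space M. P (\<lambda>n. s !! n)"
  using assms by (subst (asm) PiM_eq_distr_snth) (rule AE_distrD[OF measurable_snth_PiM])

lemma (in prob_space) AE_stream_space_alw_ev:
  assumes "A \<in> sets M" and "prob A > 0"
  shows "AE s in stream_space M. alw (ev (HLD A)) s"
proof -
  have "AE s in stream_space M. (\<lambda>n. real (card {i. i < n \<and> s !! i \<in> A}) / real n) \<longlonglongrightarrow> prob A"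
    using AE_stream_space_of_AE_PiM[OF AE_PiM_frequency_tendsto[OF \<open>A \<in> sets M\<close>]] .
  then show ?thesis
  proof eventually_elim
    case (elim s)
    then have "\<exists>\<^sub>\<infinity>i. s !! i \<in> A"
      using \<open>prob A > 0\<close> by (rule INFM_of_density_pos)
    then show "alw (ev (HLD A)) s"
      by (simp add: infinite_iff_alw_ev[symmetric] HLD_iff INFM_iff_infinite)
  qed
qed

section \<open>The law of a filtered i.i.d. stream\<close>

lemma sets_stream_space_pmf:
  "sets (stream_space (measure_pmf M)) = sets (stream_space (count_space UNIV))"
  by (rule sets_stream_space_cong) simp

lemma emeasure_stream_space_pmf_sstart_Cons:
  "emeasure (stream_space (measure_pmf M)) (sstart S (x # xs))
    = pmf M x * emeasure (stream_space (measure_pmf M)) (sstart S xs)"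
proof -
  have "emeasure (stream_space (measure_pmf M)) (sstart S (x # xs))
      = (\<integral>\<^sup>+t. indicator {x} t * emeasure (stream_space (measure_pmf M)) (sstart S xs) \<partial>M)"
    by (subst prob_space.emeasure_stream_space[OF measure_pmf.prob_space_axioms])
       (auto simp: space_stream_space intro!: nn_integral_cong split: split_indicator)
  also have "\<dots> = pmf M x * emeasure (stream_space (measure_pmf M)) (sstart S xs)"
    by (simp add: nn_integral_multc emeasure_pmf_single)
  finally show ?thesis .
qed

lemma emeasure_sfilter_sstart_Cons:
  fixes M :: "'a pmf"
  assumes "x \<in> S" and "set_pmf M \<inter> S \<noteq> {}"
  shows "emeasure (stream_space (measure_pmf M)) (sfilter (\<lambda>y. y \<in> S) -` sstart S (x # xs))
    = pmf (cond_pmf M S) x * emeasure (stream_space (measure_pmf M)) (sfilter (\<lambda>y. y \<in> S) -` sstart S xs)"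
proof -
  let ?N = "stream_space (measure_pmf M)" and ?F = "sfilter (\<lambda>y. y \<in> S)"
  interpret N: prob_space ?N
    by (rule prob_space.prob_space_stream_space[OF measure_pmf.prob_space_axioms])
  define hits where "hits xs = measure ?N (?F -` sstart S xs)" for xs
  have [measurable]: "?F -` sstart S xs \<in> sets ?N" for xs
    using measurable_sets[OF measurable_sfilter sstart_sets] by (simp add: space_stream_space sets_stream_space_pmf)
  have emeasure_hits: "emeasure ?N (?F -` sstart S xs) = hits xs" for xs
    by (simp add: hits_def N.emeasure_eq_measure)
  have shift: "{s \<in> space ?N. t ## s \<in> ?F -` sstart S (x # xs)}
      = (if t \<in> S then if t = x then ?F -` sstart S xs else {} else ?F -` sstart S (x # xs))" for t
    by (auto simp: space_stream_space sfilter_Stream)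
  have "emeasure ?N (?F -` sstart S (x # xs))
      = (\<integral>\<^sup>+t. indicator {x} t * ennreal (hits xs) + indicator (- S) t * ennreal (hits (x # xs)) \<partial>M)"
    by (subst prob_space.emeasure_stream_space[OF measure_pmf.prob_space_axioms])
       (simp_all only: shift, auto simp: emeasure_hits \<open>x \<in> S\<close> intro!: nn_integral_cong split: split_indicator)
  then have "ennreal (hits (x # xs))
      = (\<integral>\<^sup>+t. indicator {x} t * ennreal (hits xs) + indicator (- S) t * ennreal (hits (x # xs)) \<partial>M)"
    by (simp only: emeasure_hits)
  also have "\<dots> = ennreal (pmf M x * hits xs + measure M (- S) * hits (x # xs))"
    by (simp add: nn_integral_add nn_integral_multc measure_pmf.emeasure_eq_measure measure_pmf_single
          ennreal_mult' ennreal_plus hits_def)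
  finally have "hits (x # xs) = pmf M x * hits xs + measure M (- S) * hits (x # xs)"
    by (subst (asm) ennreal_inj) (simp_all add: hits_def)
  then have "hits (x # xs) = pmf M x * hits xs + (1 - measure M S) * hits (x # xs)"
    by (simp add: measure_pmf.prob_compl[symmetric] Compl_eq_Diff_UNIV)
  moreover have "measure M S > 0"
    using \<open>set_pmf M \<inter> S \<noteq> {}\<close> by (auto intro: measure_pmf_posI)
  ultimately have "hits (x # xs) = pmf (cond_pmf M S) x * hits xs"
    using \<open>x \<in> S\<close> \<open>set_pmf M \<inter> S \<noteq> {}\<close> by (simp add: pmf_cond field_simps)
  then show ?thesis
    by (simp add: emeasure_hits ennreal_mult')
qed

theorem distr_sfilter_stream_space:
  fixes M :: "'a::countable pmf"
  assumes "set_pmf M \<inter> S \<noteq> {}"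
  shows "distr (stream_space M) (stream_space (count_space UNIV)) (sfilter (\<lambda>x. x \<in> S))
    = stream_space (cond_pmf M S)"
    (is "?Q = ?C")
proof -
  let ?F = "sfilter (\<lambda>x. x \<in> S)"
  have F_measurable: "?F \<in> measurable (stream_space M) (stream_space (count_space UNIV))"
    by (simp add: measurable_cong_sets[OF sets_stream_space_pmf refl])
  interpret Q: prob_space ?Q
    by (rule prob_space.prob_space_distr[OF prob_space.prob_space_stream_space F_measurable])
       (rule measure_pmf.prob_space_axioms)
  interpret C: prob_space ?C
    by (rule prob_space.prob_space_stream_space[OF measure_pmf.prob_space_axioms])
  have "AE s in stream_space M. alw (ev (HLD S)) s"
    using \<open>set_pmf M \<inter> S \<noteq> {}\<close>
    by (intro prob_space.AE_stream_space_alw_ev measure_pmf.prob_space_axioms) (auto intro: measure_pmf_posI)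
  then have "AE s in stream_space M. ?F s \<in> streams S"
    by eventually_elim (use sfilter_streams[of "\<lambda>x. x \<in> S" _ UNIV] in \<open>simp add: HLD_def\<close>)
  then have Q_streams: "AE s in ?Q. s \<in> streams S"
    by (subst AE_distr_iff[OF F_measurable]) (simp_all add: space_stream_space streams_sets)
  have "AE s in ?C. stream_all (\<lambda>x. x \<in> S) s"
    using \<open>set_pmf M \<inter> S \<noteq> {}\<close>
    by (intro prob_space.AE_stream_all measure_pmf.prob_space_axioms) (simp_all add: AE_measure_pmf_iff)
  then have C_streams: "AE s in ?C. s \<in> streams S"
    by eventually_elim (auto simp: streams_iff_sset)
  have "emeasure ?Q (sstart S xs) = emeasure ?C (sstart S xs)" if "xs \<in> lists S" for xs
    using that
  proof (induction xs)
    case Nil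
    show ?case
      using Q.emeasure_eq_1_AE[OF _ Q_streams] C.emeasure_eq_1_AE[OF _ C_streams]
      by (simp add: streams_sets sets_stream_space_pmf)
  next
    case (Cons x xs)
    then show ?case
      using assms
      by (simp add: emeasure_distr[OF F_measurable] space_stream_space
          emeasure_sfilter_sstart_Cons emeasure_stream_space_pmf_sstart_Cons)
  qed
  then show ?thesis
    using Q_streams C_streams
    by (intro stream_space_eq_sstart Q.prob_space_axioms C.prob_space_axioms) (simp_all add: sets_stream_space_pmf)
qed

section \<open>Multiple systems estimation\<close>

lemma finite_patterns: "finite (patterns L)"
  using finite_lists_length_eq[of "UNIV :: bool set" L] by (simp add: patterns_def)

lemma zero_pat_in_patterns: "zero_pat L \<in> patterns L"
  by (simp add: patterns_def zero_pat_def)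

lemma pmf_pattern_pmf:
  assumes "prob_vector L p"
  shows "pmf (pattern_pmf L p) x = (if x \<in> patterns L then p x else 0)"
  unfolding pattern_pmf_def
proof (rule pmf_embed_pmf)
  have nonneg: "x \<in> patterns L \<Longrightarrow> 0 \<le> p x" for x
    using assms by (auto simp: prob_vector_def less_imp_le)
  then show "0 \<le> (if x \<in> patterns L then p x else 0)" for x
    by simp
  have "(\<integral>\<^sup>+x. ennreal (if x \<in> patterns L then p x else 0) \<partial>count_space UNIV)
      = (\<Sum>x\<in>patterns L. ennreal (if x \<in> patterns L then p x else 0))"
    by (rule nn_integral_count_space') (auto simp: finite_patterns)
  also have "\<dots> = (\<Sum>x\<in>patterns L. ennreal (p x))"
    by (rule sum.cong) simp_all
  also have "\<dots> = 1"
    using assms nonneg by (simp add: prob_vector_def sum_ennreal)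
  finally show "(\<integral>\<^sup>+x. ennreal (if x \<in> patterns L then p x else 0) \<partial>count_space UNIV) = 1" .
qed

lemma set_pmf_pattern_pmf:
  assumes "prob_vector L p"
  shows "set_pmf (pattern_pmf L p) = patterns L"
  using assms by (auto simp: set_pmf_eq pmf_pattern_pmf prob_vector_def dest: less_imp_neq[symmetric] split: if_splits)

lemma observed_patterns_nonempty:
  assumes "L \<ge> 1"
  shows "patterns L - {zero_pat L} \<noteq> {}"
proof -
  have "True # replicate (L - 1) False \<in> patterns L - {zero_pat L}"
    using assms by (cases L) (simp_all add: patterns_def zero_pat_def)
  then show ?thesis by blast
qed

lemma measure_observed_patterns:
  assumes "prob_vector L p"
  shows "measure_pmf.prob (pattern_pmf L p) (patterns L - {zero_pat L}) = 1 - p (zero_pat L)"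
proof -
  have "measure_pmf.prob (pattern_pmf L p) (patterns L - {zero_pat L}) = (\<Sum>x\<in>patterns L - {zero_pat L}. p x)"
    using assms by (simp add: measure_measure_pmf_finite finite_patterns pmf_pattern_pmf)
  also have "\<dots> = 1 - p (zero_pat L)"
    using assms by (simp add: sum_diff1 finite_patterns zero_pat_in_patterns prob_vector_def)
  finally show ?thesis .
qed

lemma zero_pat_prob_less_1:
  assumes "prob_vector L p" and "L \<ge> 1"
  shows "p (zero_pat L) < 1"
proof -
  obtain x where "x \<in> patterns L - {zero_pat L}"
    using observed_patterns_nonempty[OF \<open>L \<ge> 1\<close>] by blast
  then have "measure_pmf.prob (pattern_pmf L p) (patterns L - {zero_pat L}) > 0"
    using assms(1) by (intro measure_pmf_posI) (simp_all add: set_pmf_pattern_pmf)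
  then show ?thesis
    using measure_observed_patterns[OF assms(1)] by simp
qed

lemma pmf_cond_pattern_pmf:
  assumes "prob_vector L p" and "L \<ge> 1"
  shows "pmf (cond_pmf (pattern_pmf L p) (patterns L - {zero_pat L})) x = qvec L p x"
  using assms observed_patterns_nonempty[OF \<open>L \<ge> 1\<close>]
  by (subst pmf_cond) (auto simp: set_pmf_pattern_pmf measure_observed_patterns pmf_pattern_pmf qvec_def)

lemma obs_counts_cong: "(\<And>i. i < N \<Longrightarrow> w i = w' i) \<Longrightarrow> obs_counts L w N = obs_counts L w' N"
  unfolding obs_counts_def by (intro ext if_cong refl arg_cong[where f = card]) auto

lemma obs_counts_sfilter:
  fixes L :: nat and s :: "bool list stream"
  defines "S \<equiv> patterns L - {zero_pat L}"
  shows "obs_counts L (\<lambda>i. s !! i) N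
    = obs_counts L (\<lambda>i. sfilter (\<lambda>x. x \<in> S) s !! i) (card {i. i < N \<and> s !! i \<in> S})"
proof
  fix x
  show "obs_counts L (\<lambda>i. s !! i) N x
    = obs_counts L (\<lambda>i. sfilter (\<lambda>x. x \<in> S) s !! i) (card {i. i < N \<and> s !! i \<in> S}) x"
  proof (cases "x \<in> S")
    case True
    have "card {i. i < N \<and> s !! i = x} = length (filter (\<lambda>y. y = x) (stake N s))"
      by (rule length_filter_stake[symmetric])
    also have "\<dots> = length (filter (\<lambda>y. y = x) (filter (\<lambda>y. y \<in> S) (stake N s)))"
      using True by (auto simp: filter_filter intro!: arg_cong[where f = length] filter_cong)
    also have "\<dots> = length (filter (\<lambda>y. y = x)
        (stake (card {i. i < N \<and> s !! i \<in> S}) (sfilter (\<lambda>x. x \<in> S) s)))"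
      by (subst stake_sfilter[of _ N s]) (simp only: length_filter_stake)
    also have "\<dots> = card {i. i < card {i. i < N \<and> s !! i \<in> S} \<and> sfilter (\<lambda>x. x \<in> S) s !! i = x}"
      by (rule length_filter_stake)
    finally show ?thesis
      using True by (simp add: obs_counts_def S_def)
  qed (auto simp: obs_counts_def S_def)
qed

lemma borel_measurable_obs_counts[measurable]:
  "(\<lambda>s. g (obs_counts L (\<lambda>i. s !! i) k)) \<in> borel_measurable (stream_space (count_space UNIV))"
proof -
  have "obs_counts L (\<lambda>i. s !! i) k = obs_counts L (\<lambda>i. stake k s ! i) k" for s :: "bool list stream"
    by (rule obs_counts_cong) simp
  then show ?thesis
    by (simp only:) (rule measurable_compose[OF measurable_stake], simp)
qed

lemma AE_observed_estimator_ratio_tendsto: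
  assumes "prob_vector L p" and "L \<ge> 1"
    and consistent: "AE w in iid_law L p. (\<lambda>N. Nhat (obs_counts L w N) / real N) \<longlonglongrightarrow> 1"
  shows "AE v in stream_space (cond_pmf (pattern_pmf L p) (patterns L - {zero_pat L})).
    (\<lambda>k. Nhat (obs_counts L (\<lambda>i. v !! i) k) / real k) \<longlonglongrightarrow> 1 / (1 - p (zero_pat L))"
proof -
  define M where "M = pattern_pmf L p"
  define S where "S = patterns L - {zero_pat L}"
  define \<mu> where "\<mu> = 1 - p (zero_pat L)"
  have "\<mu> > 0"
    using zero_pat_prob_less_1[OF assms(1,2)] by (simp add: \<mu>_def)
  have "set_pmf M \<inter> S \<noteq> {}"
    using observed_patterns_nonempty[OF \<open>L \<ge> 1\<close>] assms(1) by (auto simp: M_def S_def set_pmf_pattern_pmf)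
  have "AE s in stream_space M. (\<lambda>N. Nhat (obs_counts L (\<lambda>i. s !! i) N) / real N) \<longlonglongrightarrow> 1"
    using consistent unfolding iid_law_def M_def
    by (rule measure_pmf.AE_stream_space_of_AE_PiM)
  moreover have "AE s in stream_space M. (\<lambda>N. real (card {i. i < N \<and> s !! i \<in> S}) / real N) \<longlonglongrightarrow> \<mu>"
    using measure_pmf.AE_stream_space_of_AE_PiM[OF measure_pmf.AE_PiM_frequency_tendsto[of S M]]
    by (simp add: M_def S_def \<mu>_def measure_observed_patterns[OF assms(1)])
  ultimately have "AE s in stream_space M.
      (\<lambda>k. Nhat (obs_counts L (\<lambda>i. sfilter (\<lambda>x. x \<in> S) s !! i) k) / real k) \<longlonglongrightarrow> 1 / \<mu>"
  proof eventually_elim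
    case (elim s)
    show ?case
    proof (rule LIMSEQ_divide_along_counter[OF _ elim(2) \<open>\<mu> > 0\<close>])
      show "(\<lambda>N. Nhat (obs_counts L (\<lambda>i. sfilter (\<lambda>x. x \<in> S) s !! i) (card {i. i < N \<and> s !! i \<in> S})) / real N)
          \<longlonglongrightarrow> 1"
        using elim(1) unfolding S_def obs_counts_sfilter[symmetric] .
    qed (simp_all add: card_less_Suc_le)
  qed
  then show ?thesis
    unfolding M_def S_def \<mu>_def
    by (subst distr_sfilter_stream_space[symmetric])
       (simp_all add: AE_distr_iff \<open>set_pmf M \<inter> S \<noteq> {}\<close>[unfolded M_def S_def])
qed

lemma zero_pat_prob_eq_if_qvec_eq:
  assumes "L \<ge> 1" and "prob_vector L p" and "prob_vector L p'"
    and "AE w in iid_law L p. (\<lambda>N. Nhat (obs_counts L w N) / real N) \<longlonglongrightarrow> 1"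
    and "AE w in iid_law L p'. (\<lambda>N. Nhat (obs_counts L w N) / real N) \<longlonglongrightarrow> 1"
    and "qvec L p = qvec L p'"
  shows "p (zero_pat L) = p' (zero_pat L)"
proof -
  let ?C = "\<lambda>p. cond_pmf (pattern_pmf L p) (patterns L - {zero_pat L})"
  interpret C: prob_space "stream_space (?C p)"
    by (rule prob_space.prob_space_stream_space[OF measure_pmf.prob_space_axioms])
  have same_law: "?C p' = ?C p"
    by (rule pmf_eqI)
       (simp only: pmf_cond_pattern_pmf[OF assms(2,1)] pmf_cond_pattern_pmf[OF assms(3,1)] assms(6))
  have "AE v in stream_space (?C p). 1 / (1 - p (zero_pat L)) = 1 / (1 - p' (zero_pat L))"
    using AE_observed_estimator_ratio_tendsto[OF assms(2,1,4)]
      AE_observed_estimator_ratio_tendsto[OF assms(3,1,5), unfolded same_law]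
    by eventually_elim (rule LIMSEQ_unique)
  then show ?thesis
    using zero_pat_prob_less_1[OF assms(2,1)] zero_pat_prob_less_1[OF assms(3,1)] by simp
qed

theorem proposition1:
  fixes L :: nat and \<Theta> :: "(bool list \<Rightarrow> real) set"
  assumes "L \<ge> 2"
    and "\<forall>p\<in>\<Theta>. prob_vector L p"
    and "\<exists>Nhat. consistent_estimator L \<Theta> Nhat"
  shows "\<exists>f :: (bool list \<Rightarrow> real) \<Rightarrow> real. \<forall>p\<in>\<Theta>. p (zero_pat L) = f (qvec L p)"
proof
  obtain Nhat where "consistent_estimator L \<Theta> Nhat"
    using assms(3) by blast
  then have determined: "p (zero_pat L) = p' (zero_pat L)"
    if "p \<in> \<Theta>" "p' \<in> \<Theta>" "qvec L p = qvec L p'" for p p'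
    using that assms(1,2)
    by (intro zero_pat_prob_eq_if_qvec_eq[of L p p' Nhat]) (auto simp: consistent_estimator_def)
  show "\<forall>p\<in>\<Theta>. p (zero_pat L) = inv_into \<Theta> (qvec L) (qvec L p) (zero_pat L)"
  proof
    fix p assume "p \<in> \<Theta>"
    then have "qvec L p = qvec L (inv_into \<Theta> (qvec L) (qvec L p))"
      by (simp add: f_inv_into_f)
    with \<open>p \<in> \<Theta>\<close> show "p (zero_pat L) = inv_into \<Theta> (qvec L) (qvec L p) (zero_pat L)"
      by (intro determined inv_into_into) auto
  qed
qed

end
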